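(* Let $k\ge 1$, $n_1,\dots,n_k\in\mathbb{N}$ and $m\in\mathbb{N}$ with $m\ge2$. For each $j$ let $I_j:\ell_2^{2n_j,\mathbb{R}}\to\ell_\infty^{N_j,\mathbb{R}}$ be an injective linear operator with $\|I_j\|\le1$ and $\|I_j^{-1}\|\le\frac{m}{m-1}$, and put $c^j_i=I_j(e_i)\in\mathbb{R}^{N_j}$ for $1\le i\le 2n_j$, with coordinates $c^j_i(s)$. Let $\rho=(\rho_{i_1,\dots,i_k})\in\mathbb{C}^{n_1}\otimes\cdots\otimes\mathbb{C}^{n_k}$. Consider as variables a complex array $\lambda=(\lambda_{i_1,\dots,i_k})$, $1\le i_j\le n_j$ (equivalently, the $2n_1\cdots n_k$ real numbers $\operatorname{Re}\lambda_{i_1,\dots,i_k},\operatorname{Im}\lambda_{i_1,\dots,i_k}$), and define the real array $\tilde\lambda_{i_1,\dots,i_k}$, $1\le i_j\le 2n_j$, as follows: for $j\le k$ let $i'_j=i_j$ if $i_j\le n_j$ and $i'_j=i_j-n_j$ if $i_j>n_j$; let $t$ be the number of $j\in\{1,\dots,k-1\}$ with $i_j>n_j$; then $\tilde\lambda_{i_1,\dots,i_k}=\operatorname{Re}(\mathrm{i}^{t}\lambda_{i'_1,\dots,i'_k})$ if $i_k\le n_k$ and $\tilde\lambda_{i_1,\dots,i_k}=\operatorname{Im}(\mathrm{i}^{t}\lambda_{i'_1,\dots,i'_k})$ if $i_k>n_k$ (here $\mathrm{i}=\sqrt{-1}$). Let $V$ be the optimal value of the linear programming problem: maximize $$\sum_{i_1,\dots,i_k=1}^{n_1,\dots,n_k}\operatorname{Re}(\rho_{i_1,\dots,i_k})\tilde\lambda_{i_1,\dots,i_k}-\sum_{i_1,\dots,i_{k-1}=1}^{n_1,\dots,n_{k-1}}\sum_{i_k=n_k+1}^{2n_k}\operatorname{Im}(\rho_{i_1,\dots,i_{k-1},i_k-n_k})\tilde\lambda_{i_1,\dots,i_k}$$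 subject to $$-1\le\sum_{i_1,\dots,i_k=1}^{2n_1,\dots,2n_k}\tilde\lambda_{i_1,\dots,i_k}\,c^1_{i_1}(s_1)\cdots c^k_{i_k}(s_k)\le1\quad\text{for all }1\le s_j\le N_j,\ 1\le j\le k.$$ Then $\pi(\rho)\le V\le\left(\frac{m}{m-1}\right)^k\pi(\rho)$, where $\pi(\rho)$ is the norm of $\rho$ in $\bigotimes_{j=1,\pi}^k\ell_2^{n_j,\mathbb{C}}$; i.e. $V$ equals this norm up to a relative error bounded by $\left(\frac{m}{m-1}\right)^k-1$.
   Context: $\ell_2^{n,\mathbb{C}}$ is $\mathbb{C}^n$ with the Euclidean norm, $\ell_2^{n,\mathbb{R}}$ is $\mathbb{R}^n$ with the Euclidean norm, $\ell_\infty^{N,\mathbb{R}}$ is $\mathbb{R}^N$ with the sup-norm, and $e_1,e_2,\dots$ is the canonical basis. For injective $I$, $\|I^{-1}\|$ is the norm of the inverse on the range of $I$. Tensors in $\mathbb{C}^{n_1}\otimes\cdots\otimes\mathbb{C}^{n_k}$ are identified with coefficient arrays with respect to $e_{i_1}\otimes\cdots\otimes e_{i_k}$. The projective norm on $\bigotimes_{j=1}^kX_j$ is $\pi(u)=\inf\{\sum_{i=1}^r\|u^1_i\|\cdots\|u^k_i\|: u=\sum_{i=1}^r u^1_i\otimes\cdots\otimes u^k_i\}$; $\bigotimes_{j=1,\pi}^kX_j$ denotes the tensor product with this norm. The array $\tilde\lambda$ is the coefficient array of the real $(k-1)$-linear map $\mathbb{R}^{2n_1}\times\cdots\times\mathbb{R}^{2n_{k-1}}\to\mathbb{R}^{2n_k}$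 obtained from the complex $(k-1)$-linear map associated with $\lambda$ by identifying $\mathbb{C}^{n}$ with $\mathbb{R}^{2n}$ via $z\mapsto(\operatorname{Re}z,\operatorname{Im}z)$. *)

theory Defs
  imports Complex_Main "HOL-Library.FuncSet"
begin

text \<open>Conventions: all indices are 0-based. Tensor indices are functions
  nat \<Rightarrow> nat in an extensional product (PiE) over the slots 0..k-1.
  Vectors of R^d / C^d are functions nat \<Rightarrow> _ of which only the values at
  0..d-1 matter.\<close>

definition l2r :: "nat \<Rightarrow> (nat \<Rightarrow> real) \<Rightarrow> real" where
  "l2r d x = sqrt (\<Sum>i<d. (x i)\<^sup>2)"

definition l2c :: "nat \<Rightarrow> (nat \<Rightarrow> complex) \<Rightarrow> real" where
  "l2c d x = sqrt (\<Sum>i<d. (cmod (x i))\<^sup>2)"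

definition linf :: "nat \<Rightarrow> (nat \<Rightarrow> real) \<Rightarrow> real" where
  "linf N v = Max (insert 0 ((\<lambda>s. \<bar>v s\<bar>) ` {..<N}))"

text \<open>The linear map R^d \<rightarrow> R^N whose columns are c 0, ..., c (d-1):
  c i = I(e_i), with coordinates c i s.\<close>
definition colmap :: "nat \<Rightarrow> (nat \<Rightarrow> nat \<Rightarrow> real) \<Rightarrow> (nat \<Rightarrow> real) \<Rightarrow> nat \<Rightarrow> real" where
  "colmap d c x = (\<lambda>s. \<Sum>i<d. x i * c i s)"

definition opnorm :: "nat \<Rightarrow> nat \<Rightarrow> (nat \<Rightarrow> nat \<Rightarrow> real) \<Rightarrow> real" where
  "opnorm d N c = Sup ((\<lambda>x. linf N (colmap d c x)) ` {x. l2r d x \<le> 1})"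

text \<open>Norm of the inverse on the range of an injective I.\<close>
definition invnorm :: "nat \<Rightarrow> nat \<Rightarrow> (nat \<Rightarrow> nat \<Rightarrow> real) \<Rightarrow> real" where
  "invnorm d N c = Sup ((\<lambda>x. l2r d x) ` {x. linf N (colmap d c x) \<le> 1})"

definition injective_map :: "nat \<Rightarrow> nat \<Rightarrow> (nat \<Rightarrow> nat \<Rightarrow> real) \<Rightarrow> bool" where
  "injective_map d N c \<longleftrightarrow>
     (\<forall>x y. (\<forall>s<N. colmap d c x s = colmap d c y s) \<longrightarrow> (\<forall>i<d. x i = y i))"

definition idx :: "nat \<Rightarrow> (nat \<Rightarrow> nat) \<Rightarrow> (nat \<Rightarrow> nat) set" where
  "idx k n = PiE {..<k} (\<lambda>j. {..<n j})"

text \<open>Projective tensor norm of rho in C^{n_1} \<otimes> ... \<otimes> C^{n_k}: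
  infimum of \<Sum>_r \<Prod>_j |u_r^j| over all representations
  rho = \<Sum>_{r<R} u_r^1 \<otimes> ... \<otimes> u_r^k (u r j is the j-th factor of term r).\<close>
definition proj_norm :: "nat \<Rightarrow> (nat \<Rightarrow> nat) \<Rightarrow> ((nat \<Rightarrow> nat) \<Rightarrow> complex) \<Rightarrow> real" where
  "proj_norm k n \<rho> = Inf {(\<Sum>r<R. \<Prod>j<k. l2c (n j) (u r j)) | (R::nat) (u::nat \<Rightarrow> nat \<Rightarrow> nat \<Rightarrow> complex).
      \<forall>i\<in>idx k n. \<rho> i = (\<Sum>r<R. \<Prod>j<k. u r j (i j))}"

definition lam_tilde :: "nat \<Rightarrow> (nat \<Rightarrow> nat) \<Rightarrow> ((nat \<Rightarrow> nat) \<Rightarrow> complex) \<Rightarrow> (nat \<Rightarrow> nat) \<Rightarrow> real" where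
  "lam_tilde k n lam i =
     (let i' = restrict (\<lambda>j. if i j < n j then i j else i j - n j) {..<k};
          t = card {j. j < k - 1 \<and> n j \<le> i j};
          z = \<i> ^ t * lam i'
      in if i (k - 1) < n (k - 1) then Re z else Im z)"

definition lp_objective :: "nat \<Rightarrow> (nat \<Rightarrow> nat) \<Rightarrow> ((nat \<Rightarrow> nat) \<Rightarrow> complex) \<Rightarrow> ((nat \<Rightarrow> nat) \<Rightarrow> complex) \<Rightarrow> real" where
  "lp_objective k n \<rho> lam =
     (\<Sum>i\<in>idx k n. Re (\<rho> i) * lam_tilde k n lam i)
   - (\<Sum>i\<in>PiE {..<k} (\<lambda>j. if j = k - 1 then {n j..<2 * n j} else {..<n j}).
        Im (\<rho> (restrict (\<lambda>j. if j = k - 1 then i j - n j else i j) {..<k}))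
        * lam_tilde k n lam i)"

text \<open>Feasibility: c j i s is the s-th coordinate of c^j_i = I_j(e_i).\<close>
definition lp_feasible :: "nat \<Rightarrow> (nat \<Rightarrow> nat) \<Rightarrow> (nat \<Rightarrow> nat) \<Rightarrow> (nat \<Rightarrow> nat \<Rightarrow> nat \<Rightarrow> real)
    \<Rightarrow> ((nat \<Rightarrow> nat) \<Rightarrow> complex) \<Rightarrow> bool" where
  "lp_feasible k n N c lam \<longleftrightarrow>
     (\<forall>s\<in>idx k N.
        \<bar>\<Sum>i\<in>idx k (\<lambda>j. 2 * n j). lam_tilde k n lam i * (\<Prod>j<k. c j (i j) (s j))\<bar> \<le> 1)"

definition lp_value :: "nat \<Rightarrow> (nat \<Rightarrow> nat) \<Rightarrow> (nat \<Rightarrow> nat) \<Rightarrow> (nat \<Rightarrow> nat \<Rightarrow> nat \<Rightarrow> real)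
    \<Rightarrow> ((nat \<Rightarrow> nat) \<Rightarrow> complex) \<Rightarrow> real" where
  "lp_value k n N c \<rho> = Sup (lp_objective k n \<rho> ` {lam. lp_feasible k n N c lam})"

end

theory Submission
  imports Defs "HOL-Analysis.Analysis" "HOL-Library.Function_Algebras"
begin

text \<open>Identify \<open>\<complex>\<^sup>n\<close> with \<open>\<real>\<^sup>2\<^sup>n\<close>. Then \<open>lam\<close> is feasible iff the realification of the complex
  multilinear form \<open>lam\<close> has absolute value at most \<open>1\<close> on all tuples of rows
  \<open>c\<^sub>j(\<cdot>, s\<^sub>j)\<close> of the matrices of the \<open>I\<^sub>j\<close>, and the objective is \<open>Re \<langle>\<rho>, lam\<rangle>\<close>.
  The rows have norm at most \<open>\<parallel>I\<^sub>j\<parallel> \<le> 1\<close>, so a Hahn-Banach functional supporting the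
  projective norm at \<open>\<rho>\<close> is feasible, which gives \<open>\<pi>(\<rho>) \<le> V\<close>. Conversely, replacing the rows
  by arbitrary vectors one slot at a time costs a factor \<open>\<parallel>I\<^sub>j\<^sup>-\<^sup>1\<parallel> \<le> m/(m-1)\<close> per slot, so a
  feasible \<open>lam\<close> is bounded by \<open>(m/(m-1))\<^sup>k\<close> on elementary tensors of unit vectors and
  hence \<open>Re \<langle>\<rho>, lam\<rangle> \<le> (m/(m-1))\<^sup>k \<pi>(\<rho>)\<close>.\<close>

section \<open>Norms and the operators \<open>I\<^sub>j\<close>\<close>

lemma linf_nonneg: "0 \<le> linf N v"
  unfolding linf_def by (simp add: Max_ge_iff)

lemma abs_le_linf: "s < N \<Longrightarrow> \<bar>v s\<bar> \<le> linf N v"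
  unfolding linf_def by (simp add: Max_ge_iff)

lemma linf_le: "0 \<le> B \<Longrightarrow> (\<And>s. s < N \<Longrightarrow> \<bar>v s\<bar> \<le> B) \<Longrightarrow> linf N v \<le> B"
  unfolding linf_def by (auto simp add: Max_le_iff)

lemma l2r_eq_L2_set: "l2r d x = L2_set x {..<d}"
  unfolding l2r_def L2_set_def by simp

lemma l2r_nonneg: "0 \<le> l2r d x"
  unfolding l2r_def by (simp add: sum_nonneg)

lemma l2r_power2: "(l2r d x)\<^sup>2 = (\<Sum>i<d. (x i)\<^sup>2)"
  unfolding l2r_def by (simp add: sum_nonneg)

lemma l2r_scale: "0 \<le> r \<Longrightarrow> l2r d (\<lambda>i. r * x i) = r * l2r d x"
  unfolding l2r_eq_L2_set by (rule L2_set_right_distrib[symmetric])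

lemma abs_le_l2r: "i < d \<Longrightarrow> \<bar>x i\<bar> \<le> l2r d x"
  unfolding l2r_def
  by (rule real_le_rsqrt) (simp add: member_le_sum[where f="\<lambda>i. (x i)\<^sup>2"])

lemma abs_sum_mult_le_l2r: "\<bar>\<Sum>p<d. x p * a p\<bar> \<le> l2r d x * l2r d a"
proof -
  have "\<bar>\<Sum>p<d. x p * a p\<bar> \<le> (\<Sum>p<d. \<bar>x p\<bar> * \<bar>a p\<bar>)"
    unfolding abs_mult[symmetric] by (rule sum_abs)
  also have "\<dots> \<le> l2r d x * l2r d a"
    unfolding l2r_eq_L2_set by (rule L2_set_mult_ineq)
  finally show ?thesis .
qed

lemma l2c_nonneg: "0 \<le> l2c d v"
  unfolding l2c_def by (simp add: sum_nonneg)

lemma l2c_cong: "(\<And>p. p < d \<Longrightarrow> v p = w p) \<Longrightarrow> l2c d v = l2c d w"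
  unfolding l2c_def by simp

lemma l2c_scale: "l2c d (\<lambda>p. z * v p) = cmod z * l2c d v"
  unfolding l2c_def
  by (simp add: norm_mult power_mult_distrib flip: sum_distrib_left) (simp add: real_sqrt_mult)

lemma colmap_bounded: "bdd_above ((\<lambda>x. linf N (colmap d c x)) ` {x. l2r d x \<le> 1})"
proof (rule bdd_aboveI2)
  fix x assume "x \<in> {x. l2r d x \<le> 1}"
  then have x: "\<bar>x i\<bar> \<le> 1" if "i < d" for i
    using abs_le_l2r[OF that, of x] by simp
  show "linf N (colmap d c x) \<le> (\<Sum>s<N. \<Sum>i<d. \<bar>c i s\<bar>)"
  proof (rule linf_le)
    fix s assume "s < N"
    have "\<bar>colmap d c x s\<bar> \<le> (\<Sum>i<d. \<bar>x i\<bar> * \<bar>c i s\<bar>)"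
      unfolding colmap_def abs_mult[symmetric] by (rule sum_abs)
    also have "\<dots> \<le> (\<Sum>i<d. \<bar>c i s\<bar>)"
      by (intro sum_mono mult_left_le_one_le) (auto simp: x)
    also have "\<dots> \<le> (\<Sum>s<N. \<Sum>i<d. \<bar>c i s\<bar>)"
      by (rule member_le_sum[where f="\<lambda>s. \<Sum>i<d. \<bar>c i s\<bar>"]) (use \<open>s < N\<close> in auto)
    finally show "\<bar>colmap d c x s\<bar> \<le> (\<Sum>s<N. \<Sum>i<d. \<bar>c i s\<bar>)" .
  qed (simp add: sum_nonneg)
qed

text \<open>Test \<open>I\<close> on the normalised row \<open>x = c(\<cdot>, s) / r\<close> with \<open>r = \<parallel>c(\<cdot>, s)\<parallel>\<close>: then
  \<open>(I x)\<^sub>s = r\<close>, also for \<open>r = 0\<close> because \<open>x / 0 = 0\<close>.\<close>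
lemma row_l2r_le_opnorm:
  assumes "s < N"
  shows "l2r d (\<lambda>i. c i s) \<le> opnorm d N c"
proof -
  define r where "r = l2r d (\<lambda>i. c i s)"
  define x where "x = (\<lambda>i. c i s / r)"
  have "l2r d x = r / r"
    using l2r_scale[of "1 / r" d "\<lambda>i. c i s"] by (simp add: x_def r_def l2r_nonneg)
  then have "l2r d x \<le> 1" by simp
  have "colmap d c x s = (\<Sum>i<d. (c i s)\<^sup>2) / r"
    unfolding colmap_def x_def by (simp add: power2_eq_square sum_divide_distrib)
  also have "\<dots> = r"
    unfolding r_def l2r_power2[symmetric] by (simp add: power2_eq_square)
  finally have "r \<le> linf N (colmap d c x)"
    using abs_le_linf[OF assms, of "colmap d c x"] by simp
  also have "\<dots> \<le> opnorm d N c"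
    unfolding opnorm_def by (rule cSup_upper) (use \<open>l2r d x \<le> 1\<close> colmap_bounded in auto)
  finally show ?thesis unfolding r_def .
qed

lemma colmap_scale: "colmap d c (\<lambda>i. r * x i) s = r * colmap d c x s"
  unfolding colmap_def by (simp add: sum_distrib_left mult.assoc)

lemma compact_imp_pos_lower_bound:
  fixes g :: "'a::topological_space \<Rightarrow> real"
  assumes "compact S" "continuous_on S g" "\<And>x. x \<in> S \<Longrightarrow> 0 < g x"
  shows "\<exists>e>0. \<forall>x\<in>S. e \<le> g x"
proof (cases "S = {}")
  case False
  then obtain x0 where "x0 \<in> S" "\<forall>x\<in>S. g x0 \<le> g x"
    using continuous_attains_inf[OF assms(1) False assms(2)] by blast
  then show ?thesis using assms(3) by blast
qed (rule exI[of _ 1], simp)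

lemma compact_l2r_sphere: "compact {x :: nat \<Rightarrow> real. (\<forall>i\<ge>d. x i = 0) \<and> l2r d x = 1}"
proof -
  define P where "P = PiE UNIV (\<lambda>i. if i < d then {-1..1::real} else {0})"
  define S where "S = {x :: nat \<Rightarrow> real. (\<forall>i\<ge>d. x i = 0) \<and> l2r d x = 1}"
  have coord: "continuous_on UNIV (\<lambda>x::nat \<Rightarrow> real. x i)" for i
    by simp
  have "compactin (product_topology (\<lambda>i. euclidean) UNIV) P"
    unfolding P_def by (subst compactin_PiE) auto
  moreover have "closed S"
    unfolding S_def Collect_conj_eq l2r_def
    by (intro closed_Int closed_Collect_all closed_Collect_imp closed_Collect_eq
        closed_Collect_le continuous_intros coord) auto
  ultimately have "compact (P \<inter> S)"
    by (auto simp: euclidean_product_topology intro: compact_Int_closed)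
  moreover have "S \<subseteq> P"
  proof
    fix x assume "x \<in> S"
    have "x i \<in> (if i < d then {-1..1} else {0})" for i
      using abs_le_l2r[of i d x] \<open>x \<in> S\<close> by (auto simp: S_def abs_le_iff)
    then show "x \<in> P" by (simp add: P_def PiE_UNIV_domain)
  qed
  ultimately show ?thesis by (simp add: S_def Int_absorb1)
qed

lemma injective_map_sphere_bound:
  assumes inj: "injective_map d N c"
  shows "\<exists>e>0. \<forall>x. (\<forall>i\<ge>d. x i = 0) \<longrightarrow> l2r d x = 1 \<longrightarrow> e \<le> (\<Sum>s<N. (colmap d c x s)\<^sup>2)"
proof -
  define g where "g x = (\<Sum>s<N. (colmap d c x s)\<^sup>2)" for x
  have "continuous_on UNIV g"
    unfolding g_def colmap_def by (intro continuous_intros) simp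
  then have cont: "continuous_on {x. (\<forall>i\<ge>d. x i = 0) \<and> l2r d x = 1} g"
    by (rule continuous_on_subset) simp
  have pos: "0 < g x" if "l2r d x = 1" for x
  proof (rule ccontr)
    assume "\<not> 0 < g x"
    moreover have "0 \<le> g x" unfolding g_def by (simp add: sum_nonneg)
    ultimately have "g x = 0" by linarith
    then have "\<forall>s<N. colmap d c x s = colmap d c (\<lambda>_. 0) s"
      unfolding g_def by (subst (asm) sum_nonneg_eq_0_iff) (auto simp: colmap_def)
    then have "\<forall>i<d. x i = 0" using inj unfolding injective_map_def by blast
    then show False using that by (simp add: l2r_def)
  qed
  have "\<exists>e>0. \<forall>x\<in>{x. (\<forall>i\<ge>d. x i = 0) \<and> l2r d x = 1}. e \<le> g x"
    using pos by (intro compact_imp_pos_lower_bound[OF compact_l2r_sphere cont]) blast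
  then show ?thesis unfolding g_def by blast
qed

lemma injective_map_lower_bound:
  assumes "injective_map d N c"
  shows "\<exists>C. \<forall>x. l2r d x \<le> C * linf N (colmap d c x)"
proof -
  obtain e where "e > 0"
    and e: "\<And>x. \<forall>i\<ge>d. x i = 0 \<Longrightarrow> l2r d x = 1 \<Longrightarrow> e \<le> (\<Sum>s<N. (colmap d c x s)\<^sup>2)"
    using injective_map_sphere_bound[OF assms] by blast
  have "l2r d x \<le> sqrt (N / e) * linf N (colmap d c x)" for x
  proof (cases "l2r d x = 0")
    case False
    define r where "r = l2r d x"
    define M where "M = linf N (colmap d c x)"
    have "r > 0" using False l2r_nonneg[of d x] by (simp add: r_def)
    define x' where "x' i = (if i < d then x i / r else 0)" for i
    have "l2r d x' = l2r d (\<lambda>i. (1 / r) * x i)"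
      unfolding l2r_def by (intro arg_cong[where f=sqrt] sum.cong) (auto simp: x'_def)
    then have "l2r d x' = 1" using l2r_scale[of "1 / r" d x] \<open>r > 0\<close> by (simp add: r_def)
    then have "e \<le> (\<Sum>s<N. (colmap d c x' s)\<^sup>2)" by (intro e) (simp add: x'_def)
    also have "\<dots> = (\<Sum>s<N. (colmap d c x s)\<^sup>2) / r\<^sup>2"
      by (simp add: colmap_def x'_def power_divide flip: sum_divide_distrib)
    also have "\<dots> \<le> N * M\<^sup>2 / r\<^sup>2"
    proof (intro divide_right_mono)
      have "(colmap d c x s)\<^sup>2 \<le> M\<^sup>2" if "s < N" for s
        using abs_le_linf[OF that, of "colmap d c x"] linf_nonneg[of N "colmap d c x"]
        unfolding M_def by (metis abs_le_square_iff abs_of_nonneg)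
      then show "(\<Sum>s<N. (colmap d c x s)\<^sup>2) \<le> N * M\<^sup>2"
        using sum_mono[of "{..<N}" "\<lambda>s. (colmap d c x s)\<^sup>2" "\<lambda>_. M\<^sup>2"] by simp
    qed simp
    finally have "r\<^sup>2 \<le> (N / e) * M\<^sup>2"
      using \<open>r > 0\<close> \<open>e > 0\<close> by (simp add: pos_le_divide_eq mult.commute mult.left_commute)
    then have "r \<le> sqrt ((N / e) * M\<^sup>2)"
      by (rule real_le_rsqrt)
    also have "\<dots> = sqrt (N / e) * M"
      by (subst real_sqrt_mult) (simp add: M_def linf_nonneg)
    finally show ?thesis by (simp add: r_def M_def)
  qed (use \<open>e > 0\<close> in \<open>simp add: linf_nonneg\<close>)
  then show ?thesis by blast
qed

lemma l2r_le_invnorm: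
  assumes "injective_map d N c"
  shows "l2r d x \<le> invnorm d N c * linf N (colmap d c x)"
proof -
  obtain C where C: "\<And>x. l2r d x \<le> C * linf N (colmap d c x)"
    using injective_map_lower_bound[OF assms] by blast
  have bdd: "bdd_above (l2r d ` {x. linf N (colmap d c x) \<le> 1})"
  proof (rule bdd_aboveI2)
    fix x assume "x \<in> {x. linf N (colmap d c x) \<le> 1}"
    then have "linf N (colmap d c x) \<le> 1" by simp
    have "C * linf N (colmap d c x) \<le> \<bar>C\<bar> * linf N (colmap d c x)"
      by (intro mult_right_mono) (simp_all add: linf_nonneg)
    also have "\<dots> \<le> \<bar>C\<bar>"
      using \<open>linf N (colmap d c x) \<le> 1\<close> by (simp add: mult_left_le)
    finally show "l2r d x \<le> \<bar>C\<bar>" using C[of x] by linarith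
  qed
  define L where "L = linf N (colmap d c x)"
  show ?thesis
  proof (cases "L = 0")
    case True
    then show ?thesis using C[of x] l2r_nonneg[of d x] by (simp add: L_def)
  next
    case False
    then have "L > 0" using linf_nonneg[of N "colmap d c x"] by (simp add: L_def)
    define x' where "x' = (\<lambda>i. (1 / L) * x i)"
    have "\<bar>colmap d c x' s\<bar> \<le> 1" if "s < N" for s
      using abs_le_linf[OF that, of "colmap d c x"] \<open>L > 0\<close>
      unfolding x'_def colmap_scale by (simp add: abs_mult L_def)
    then have "linf N (colmap d c x') \<le> 1"
      by (intro linf_le) auto
    then have "l2r d x' \<le> invnorm d N c"
      unfolding invnorm_def by (intro cSup_upper bdd) simp
    moreover have "l2r d x' = l2r d x / L"
      unfolding x'_def using l2r_scale[of "1 / L" d x] \<open>L > 0\<close> by simp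
    ultimately have "l2r d x / L \<le> invnorm d N c" by simp
    then show ?thesis using \<open>L > 0\<close> unfolding L_def[symmetric] by (simp add: pos_divide_le_eq)
  qed
qed

section \<open>The projective norm\<close>

definition represents :: "nat \<Rightarrow> (nat \<Rightarrow> nat) \<Rightarrow> ((nat \<Rightarrow> nat) \<Rightarrow> complex)
    \<Rightarrow> nat \<Rightarrow> (nat \<Rightarrow> nat \<Rightarrow> nat \<Rightarrow> complex) \<Rightarrow> bool" where
  "represents k n \<sigma> R u \<longleftrightarrow> (\<forall>i\<in>idx k n. \<sigma> i = (\<Sum>r<R. \<Prod>j<k. u r j (i j)))"

definition rep_cost :: "nat \<Rightarrow> (nat \<Rightarrow> nat) \<Rightarrow> nat \<Rightarrow> (nat \<Rightarrow> nat \<Rightarrow> nat \<Rightarrow> complex) \<Rightarrow> real" where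
  "rep_cost k n R u = (\<Sum>r<R. \<Prod>j<k. l2c (n j) (u r j))"

lemma proj_norm_eq_Inf: "proj_norm k n \<sigma> = Inf {rep_cost k n R u | R u. represents k n \<sigma> R u}"
  unfolding proj_norm_def rep_cost_def represents_def by simp

lemma rep_cost_nonneg: "0 \<le> rep_cost k n R u"
  unfolding rep_cost_def by (simp add: sum_nonneg prod_nonneg l2c_nonneg)

lemma finite_idx: "finite (idx k n)"
  unfolding idx_def by (simp add: finite_PiE)

lemma idx_lt: "i \<in> idx k n \<Longrightarrow> j < k \<Longrightarrow> i j < n j"
  by (auto simp: idx_def PiE_iff)

lemma idx_eqI: "i \<in> idx k n \<Longrightarrow> i' \<in> idx k n \<Longrightarrow> (\<And>j. j < k \<Longrightarrow> i j = i' j) \<Longrightarrow> i = i'"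
  unfolding idx_def by (metis PiE_ext lessThan_iff)

lemma prod_scale_first:
  fixes f :: "nat \<Rightarrow> 'a::comm_monoid_mult"
  assumes "0 < k"
  shows "(\<Prod>j<k. (if j = 0 then z else 1) * f j) = z * (\<Prod>j<k. f j)"
  using assms by (simp add: prod.distrib prod.delta)

text \<open>The representation by the standard basis tensors \<open>\<sigma>\<^sub>i e\<^sub>i\<^sub>1 \<otimes> \<dots> \<otimes> e\<^sub>i\<^sub>k\<close>, the coefficient
  carried by the first factor; this needs \<open>k \<ge> 1\<close>.\<close>
lemma represents_exists:
  assumes "0 < k"
  shows "\<exists>R u. represents k n \<sigma> R u"
proof -
  obtain h where h: "bij_betw h {..<card (idx k n)} (idx k n)"
    using ex_bij_betw_nat_finite[OF finite_idx] atLeast0LessThan by metis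
  define u where "u r j p = (if j = 0 then \<sigma> (h r) else 1) * (if p = h r j then 1 else 0)" for r j p
  have "(\<Prod>j<k. u r j (i j)) = (if i = h r then \<sigma> (h r) else 0)"
    if "i \<in> idx k n" "r < card (idx k n)" for i r
  proof -
    have "h r \<in> idx k n" using h that(2) by (auto simp: bij_betw_def)
    have "(\<Prod>j<k. u r j (i j)) = \<sigma> (h r) * (\<Prod>j<k. if i j = h r j then 1 else 0)"
      unfolding u_def by (rule prod_scale_first[OF assms])
    also have "(\<Prod>j<k. if i j = h r j then 1 else 0) = (if i = h r then 1 else (0::complex))"
      using idx_eqI[OF that(1) \<open>h r \<in> idx k n\<close>] by (auto simp: prod_zero)
    finally show ?thesis by simp
  qed
  then have "(\<Sum>r<card (idx k n). \<Prod>j<k. u r j (i j)) = \<sigma> i" if "i \<in> idx k n" for i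
    using sum.reindex_bij_betw[OF h, of "\<lambda>a. if i = a then \<sigma> a else 0"] that
    by (simp add: finite_idx)
  then show ?thesis unfolding represents_def by metis
qed

lemma proj_norm_le_rep_cost: "represents k n \<sigma> R u \<Longrightarrow> proj_norm k n \<sigma> \<le> rep_cost k n R u"
  unfolding proj_norm_eq_Inf by (rule cInf_lower) (auto intro!: bdd_belowI[of _ 0] rep_cost_nonneg)

lemma proj_norm_greatest:
  assumes "0 < k" "\<And>R u. represents k n \<sigma> R u \<Longrightarrow> B \<le> rep_cost k n R u"
  shows "B \<le> proj_norm k n \<sigma>"
  unfolding proj_norm_eq_Inf by (rule cInf_greatest) (use represents_exists[OF assms(1)] assms(2) in auto)

lemma proj_norm_nonneg: "0 < k \<Longrightarrow> 0 \<le> proj_norm k n \<sigma>"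
  by (rule proj_norm_greatest) (auto simp: rep_cost_nonneg)

lemma proj_norm_cong: "(\<And>i. i \<in> idx k n \<Longrightarrow> \<sigma> i = \<tau> i) \<Longrightarrow> proj_norm k n \<sigma> = proj_norm k n \<tau>"
  unfolding proj_norm_eq_Inf represents_def by simp

lemma proj_norm_tensor_le: "proj_norm k n (\<lambda>i. \<Prod>j<k. v j (i j)) \<le> (\<Prod>j<k. l2c (n j) (v j))"
  using proj_norm_le_rep_cost[of k n _ 1 "\<lambda>_. v"] by (simp add: represents_def rep_cost_def)

lemma proj_norm_zero: "0 < k \<Longrightarrow> proj_norm k n (\<lambda>_. 0) = 0"
  using proj_norm_le_rep_cost[of k n "\<lambda>_. 0" 0] proj_norm_nonneg[of k n]
  by (simp add: represents_def rep_cost_def antisym)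

lemma proj_norm_scale_le:
  assumes "0 < k"
  shows "proj_norm k n (\<lambda>i. z * \<sigma> i) \<le> cmod z * proj_norm k n \<sigma>"
proof (cases "z = 0")
  case True
  then show ?thesis using proj_norm_zero[OF assms] by simp
next
  case False
  have "proj_norm k n (\<lambda>i. z * \<sigma> i) / cmod z \<le> proj_norm k n \<sigma>"
  proof (rule proj_norm_greatest[OF assms])
    fix R u assume rep: "represents k n \<sigma> R u"
    define u' where "u' = (\<lambda>r j p. (if j = 0 then z else 1) * u r j p)"
    have "represents k n (\<lambda>i. z * \<sigma> i) R u'"
      using rep by (simp add: represents_def u'_def prod_scale_first[OF assms] sum_distrib_left)
    then have "proj_norm k n (\<lambda>i. z * \<sigma> i) \<le> rep_cost k n R u'"
      by (rule proj_norm_le_rep_cost)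
    also have "\<dots> = cmod z * rep_cost k n R u"
    proof -
      have "l2c (n j) (u' r j) = (if j = 0 then cmod z else 1) * l2c (n j) (u r j)" for r j
        unfolding u'_def l2c_scale by simp
      then show ?thesis
        by (simp add: rep_cost_def prod_scale_first[OF assms] sum_distrib_left)
    qed
    finally show "proj_norm k n (\<lambda>i. z * \<sigma> i) / cmod z \<le> rep_cost k n R u"
      using False by (simp add: divide_le_eq mult.commute)
  qed
  then show ?thesis using False by (simp add: divide_le_eq mult.commute)
qed

lemma proj_norm_scale:
  assumes "0 < k"
  shows "proj_norm k n (\<lambda>i. z * \<sigma> i) = cmod z * proj_norm k n \<sigma>"
proof (cases "z = 0")
  case True
  then show ?thesis using proj_norm_zero[OF assms] by simp
next
  case False
  have "(\<lambda>i. inverse z * (z * \<sigma> i)) = \<sigma>"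
    using False by (simp add: fun_eq_iff)
  then have "proj_norm k n \<sigma> = proj_norm k n (\<lambda>i. inverse z * (z * \<sigma> i))"
    by simp
  also have "\<dots> \<le> cmod (inverse z) * proj_norm k n (\<lambda>i. z * \<sigma> i)"
    by (rule proj_norm_scale_le[OF assms])
  finally have "proj_norm k n \<sigma> \<le> proj_norm k n (\<lambda>i. z * \<sigma> i) / cmod z"
    by (simp add: norm_inverse divide_inverse mult.commute)
  then have "cmod z * proj_norm k n \<sigma> \<le> proj_norm k n (\<lambda>i. z * \<sigma> i)"
    using False by (simp add: pos_le_divide_eq mult.commute)
  then show ?thesis using proj_norm_scale_le[OF assms] by (simp add: antisym)
qed

lemma sum_lessThan_add_split:
  fixes f :: "nat \<Rightarrow> 'a::comm_monoid_add"
  shows "(\<Sum>r<R1 + R2. f r) = (\<Sum>r<R1. f r) + (\<Sum>r<R2. f (R1 + r))"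
  by (induction R2) (auto simp: ac_simps)

lemma proj_norm_add_le:
  assumes "0 < k"
  shows "proj_norm k n (\<lambda>i. \<sigma> i + \<tau> i) \<le> proj_norm k n \<sigma> + proj_norm k n \<tau>"
proof -
  have concat: "proj_norm k n (\<lambda>i. \<sigma> i + \<tau> i) \<le> rep_cost k n R1 u1 + rep_cost k n R2 u2"
    if "represents k n \<sigma> R1 u1" "represents k n \<tau> R2 u2" for R1 u1 R2 u2
  proof -
    define u where "u r = (if r < R1 then u1 r else u2 (r - R1))" for r
    have "represents k n (\<lambda>i. \<sigma> i + \<tau> i) (R1 + R2) u"
      using that by (simp add: represents_def sum_lessThan_add_split u_def)
    then have "proj_norm k n (\<lambda>i. \<sigma> i + \<tau> i) \<le> rep_cost k n (R1 + R2) u"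
      by (rule proj_norm_le_rep_cost)
    also have "\<dots> = rep_cost k n R1 u1 + rep_cost k n R2 u2"
      by (simp add: rep_cost_def sum_lessThan_add_split u_def)
    finally show ?thesis .
  qed
  have "proj_norm k n (\<lambda>i. \<sigma> i + \<tau> i) - proj_norm k n \<tau> \<le> proj_norm k n \<sigma>"
  proof (rule proj_norm_greatest[OF assms])
    fix R1 u1 assume rep1: "represents k n \<sigma> R1 u1"
    have "proj_norm k n (\<lambda>i. \<sigma> i + \<tau> i) - rep_cost k n R1 u1 \<le> proj_norm k n \<tau>"
      by (rule proj_norm_greatest[OF assms]) (use concat[OF rep1] in force)
    then show "proj_norm k n (\<lambda>i. \<sigma> i + \<tau> i) - proj_norm k n \<tau> \<le> rep_cost k n R1 u1"
      by simp
  qed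
  then show ?thesis by simp
qed

section \<open>The Hahn-Banach theorem in finite dimensions\<close>

instantiation "fun" :: (type, real_vector) real_vector
begin

definition scaleR_fun :: "real \<Rightarrow> ('a \<Rightarrow> 'b) \<Rightarrow> 'a \<Rightarrow> 'b" where
  "scaleR_fun r f = (\<lambda>x. r *\<^sub>R f x)"

instance
  by standard (simp_all add: scaleR_fun_def fun_eq_iff scaleR_add_right scaleR_add_left)

end

lemma scaleR_fun_apply [simp]: "(r *\<^sub>R f) x = r *\<^sub>R f x"
  by (simp add: scaleR_fun_def)

lemma sum_fun_apply: "(\<Sum>b\<in>B. f b) x = (\<Sum>b\<in>B. f b x)"
  by (induction B rule: infinite_finite_induct) auto

definition sublinear :: "('a::real_vector \<Rightarrow> real) \<Rightarrow> bool" where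
  "sublinear p \<longleftrightarrow> (\<forall>x y. p (x + y) \<le> p x + p y) \<and> (\<forall>c x. 0 \<le> c \<longrightarrow> p (c *\<^sub>R x) = c * p x)"

text \<open>\<open>dominated p g B \<beta>\<close> says that \<open>g b \<mapsto> \<beta> b\<close> extends to a linear functional on the span
  of \<open>g ` B\<close> that is dominated by \<open>p\<close>; quantifying over all coefficient vectors also makes
  this extension well defined when the \<open>g b\<close> are linearly dependent.\<close>
definition dominated :: "('a::real_vector \<Rightarrow> real) \<Rightarrow> ('b \<Rightarrow> 'a) \<Rightarrow> 'b set \<Rightarrow> ('b \<Rightarrow> real) \<Rightarrow> bool" where
  "dominated p g B \<beta> \<longleftrightarrow> (\<forall>a. (\<Sum>b\<in>B. a b * \<beta> b) \<le> p (\<Sum>b\<in>B. a b *\<^sub>R g b))"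

lemma sublinear_zero: "sublinear p \<Longrightarrow> p 0 = 0"
  unfolding sublinear_def by (metis mult_zero_left order_refl scaleR_zero_left)

lemma dominated_singleton:
  assumes "sublinear p"
  shows "dominated p g {b} (\<lambda>_. p (g b))"
proof -
  have add: "p (x + y) \<le> p x + p y" and hom: "0 \<le> c \<Longrightarrow> p (c *\<^sub>R x) = c * p x" for x y c
    using assms by (auto simp: sublinear_def)
  have "t * p (g b) \<le> p (t *\<^sub>R g b)" for t
  proof (cases "0 \<le> t")
    case False
    have "0 \<le> p (g b) + p (- g b)"
      using add[of "g b" "- g b"] sublinear_zero[OF assms] by simp
    then have "t * p (g b) \<le> - t * p (- g b)"
      using mult_nonpos_nonneg[of t "p (g b) + p (- g b)"] False
      by (simp add: algebra_simps)
    also have "\<dots> = p (t *\<^sub>R g b)"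
      using hom[of "- t" "- g b"] False by simp
    finally show ?thesis .
  qed (simp add: hom)
  then show ?thesis by (simp add: dominated_def)
qed

text \<open>The heart of the Hahn-Banach theorem: by subadditivity,
  \<open>f x - p (x - v) \<le> p (y + v) - f y\<close> for all \<open>x, y\<close> in the old span, so some \<open>\<alpha>\<close> lies
  between the two sides.\<close>
lemma dominated_gap:
  assumes p: "sublinear p" and dom: "dominated p g B \<beta>"
  shows "\<exists>\<alpha>. \<forall>a. (\<Sum>b\<in>B. a b * \<beta> b) + \<alpha> \<le> p ((\<Sum>b\<in>B. a b *\<^sub>R g b) + v)
    \<and> (\<Sum>b\<in>B. a b * \<beta> b) - \<alpha> \<le> p ((\<Sum>b\<in>B. a b *\<^sub>R g b) - v)"
proof -
  define F where "F a = (\<Sum>b\<in>B. a b * \<beta> b)" for a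
  define X where "X a = (\<Sum>b\<in>B. a b *\<^sub>R g b)" for a
  define L where "L = {F a - p (X a - v) | a. True}"
  have L_le: "l \<le> p (X a' + v) - F a'" if "l \<in> L" for l a'
  proof -
    obtain a where l: "l = F a - p (X a - v)" using \<open>l \<in> L\<close> by (auto simp: L_def)
    have "F a + F a' = F (\<lambda>b. a b + a' b)"
      by (simp add: F_def algebra_simps sum.distrib)
    also have "\<dots> \<le> p (X (\<lambda>b. a b + a' b))"
      using dom by (simp add: dominated_def F_def X_def)
    also have "X (\<lambda>b. a b + a' b) = (X a - v) + (X a' + v)"
      by (simp add: X_def scaleR_add_left sum.distrib)
    also have "p \<dots> \<le> p (X a - v) + p (X a' + v)"
      using p unfolding sublinear_def by blast
    finally show ?thesis using l by simp
  qed
  then have "bdd_above L"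
    by (meson bdd_aboveI)
  have "F a + Sup L \<le> p (X a + v)" for a
    using cSup_least[of L "p (X a + v) - F a"] L_le by (force simp: L_def)
  moreover have "F a - Sup L \<le> p (X a - v)" for a
  proof -
    have "F a - p (X a - v) \<le> Sup L"
      by (rule cSup_upper[OF _ \<open>bdd_above L\<close>]) (auto simp: L_def)
    then show ?thesis by simp
  qed
  ultimately show ?thesis unfolding F_def X_def by blast
qed

lemma dominated_gap_scale:
  assumes p: "sublinear p" and "0 < c"
    and gap: "\<And>a. (\<Sum>b\<in>B. a b * \<beta> b) + \<alpha> \<le> p ((\<Sum>b\<in>B. a b *\<^sub>R g b) + v)"
  shows "(\<Sum>b\<in>B. a b * \<beta> b) + c * \<alpha> \<le> p ((\<Sum>b\<in>B. a b *\<^sub>R g b) + c *\<^sub>R v)"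
proof -
  define a' where "a' b = a b / c" for b
  have "(\<Sum>b\<in>B. a b * \<beta> b) + c * \<alpha> = c * ((\<Sum>b\<in>B. a' b * \<beta> b) + \<alpha>)"
    using \<open>0 < c\<close> by (simp add: a'_def sum_distrib_left algebra_simps)
  also have "\<dots> \<le> c * p ((\<Sum>b\<in>B. a' b *\<^sub>R g b) + v)"
    using gap \<open>0 < c\<close> by (simp add: mult_left_mono)
  also have "\<dots> = p (c *\<^sub>R ((\<Sum>b\<in>B. a' b *\<^sub>R g b) + v))"
    using p \<open>0 < c\<close> by (simp add: sublinear_def)
  also have "c *\<^sub>R ((\<Sum>b\<in>B. a' b *\<^sub>R g b) + v) = (\<Sum>b\<in>B. a b *\<^sub>R g b) + c *\<^sub>R v"
    using \<open>0 < c\<close> by (simp add: a'_def scaleR_add_right scaleR_sum_right)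
  finally show ?thesis .
qed

lemma dominated_insert:
  assumes p: "sublinear p" and "finite B" "b0 \<notin> B" and dom: "dominated p g B \<beta>"
  shows "\<exists>\<alpha>. dominated p g (insert b0 B) (\<beta>(b0 := \<alpha>))"
proof -
  define F where "F a = (\<Sum>b\<in>B. a b * \<beta> b)" for a
  define X where "X a = (\<Sum>b\<in>B. a b *\<^sub>R g b)" for a
  obtain \<alpha> where up: "\<And>a. F a + \<alpha> \<le> p (X a + g b0)"
    and down: "\<And>a. F a + (- \<alpha>) \<le> p (X a + - g b0)"
    using dominated_gap[OF p dom, of "g b0"] unfolding F_def X_def by auto
  have "F a + a b0 * \<alpha> \<le> p (X a + a b0 *\<^sub>R g b0)" for a
  proof -
    consider "0 < a b0" | "a b0 = 0" | "0 < - a b0" by linarith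
    then show ?thesis
    proof cases
      case 1
      from dominated_gap_scale[OF p 1 up[unfolded F_def X_def]] show ?thesis
        by (simp add: F_def X_def)
    next
      case 2
      then show ?thesis using dom by (simp add: dominated_def F_def X_def)
    next
      case 3
      from dominated_gap_scale[OF p 3 down[unfolded F_def X_def]] show ?thesis
        by (simp add: F_def X_def)
    qed
  qed
  moreover have "(\<Sum>b\<in>insert b0 B. a b * (\<beta>(b0 := \<alpha>)) b) = F a + a b0 * \<alpha>" for a
    using assms(2,3) by (simp add: F_def) (intro sum.cong; auto)
  moreover have "(\<Sum>b\<in>insert b0 B. a b *\<^sub>R g b) = X a + a b0 *\<^sub>R g b0" for a
    using assms(2,3) by (simp add: X_def add.commute)
  ultimately have "dominated p g (insert b0 B) (\<beta>(b0 := \<alpha>))"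
    unfolding dominated_def by simp
  then show ?thesis ..
qed

lemma dominated_extend:
  assumes "sublinear p" "finite B" "finite D" "dominated p g B \<beta>"
  shows "\<exists>\<beta>'. (\<forall>b\<in>B. \<beta>' b = \<beta> b) \<and> dominated p g (B \<union> D) \<beta>'"
  using assms(3)
proof (induction D rule: finite_induct)
  case empty
  then show ?case using assms(4) by auto
next
  case (insert x D)
  then obtain \<beta>' where \<beta>': "\<forall>b\<in>B. \<beta>' b = \<beta> b" "dominated p g (B \<union> D) \<beta>'"
    by blast
  show ?case
  proof (cases "x \<in> B \<union> D")
    case True
    then show ?thesis using \<beta>' by (metis Un_insert_right insert_absorb)
  next
    case False
    then obtain \<alpha> where "dominated p g (insert x (B \<union> D)) (\<beta>'(x := \<alpha>))"
      using dominated_insert[OF assms(1) _ _ \<beta>'(2)] assms(2) insert.hyps(1) by blast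
    moreover have "\<forall>b\<in>B. (\<beta>'(x := \<alpha>)) b = \<beta> b"
      using \<beta>'(1) False by simp
    ultimately show ?thesis by (metis Un_insert_right)
  qed
qed

lemma sum_insert_None_Some_bool:
  assumes "finite I"
  shows "(\<Sum>b\<in>insert None (Some ` (I \<times> UNIV)). f b)
    = f None + (\<Sum>i\<in>I. f (Some (i, False)) + f (Some (i, True)))"
proof -
  have "(\<Sum>b\<in>Some ` (I \<times> UNIV). f b) = (\<Sum>(i, im)\<in>I \<times> UNIV. f (Some (i, im)))"
    by (subst sum.reindex) (auto simp: inj_on_def)
  also have "\<dots> = (\<Sum>i\<in>I. \<Sum>im\<in>UNIV. f (Some (i, im)))"
    by (rule sum.cartesian_product[symmetric])
  also have "\<dots> = (\<Sum>i\<in>I. f (Some (i, False)) + f (Some (i, True)))"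
    by (simp add: UNIV_bool add.commute)
  finally show ?thesis using assms by simp
qed

text \<open>Hahn-Banach for \<open>\<complex>\<^sup>I\<close> as a real vector space with basis \<open>e\<^sub>i, \<i> e\<^sub>i\<close>; every real-linear
  functional on it has the form \<open>\<sigma> \<mapsto> Re (\<Sum>\<^sub>i \<sigma>\<^sub>i \<lambda>\<^sub>i)\<close>.\<close>
lemma sublinear_supporting_functional:
  fixes p :: "('i \<Rightarrow> complex) \<Rightarrow> real"
  assumes p: "sublinear p" and "finite I"
    and local: "\<And>\<sigma> \<tau>. (\<And>i. i \<in> I \<Longrightarrow> \<sigma> i = \<tau> i) \<Longrightarrow> p \<sigma> = p \<tau>"
  shows "\<exists>lam. (\<forall>\<sigma>. Re (\<Sum>i\<in>I. \<sigma> i * lam i) \<le> p \<sigma>) \<and> p \<rho> \<le> Re (\<Sum>i\<in>I. \<rho> i * lam i)"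
proof -
  define g :: "('i \<times> bool) option \<Rightarrow> 'i \<Rightarrow> complex" where
    "g b = (case b of None \<Rightarrow> \<rho> | Some (i, im) \<Rightarrow> (\<lambda>j. if j = i then (if im then \<i> else 1) else 0))"
    for b
  define D where "D = Some ` (I \<times> (UNIV :: bool set))"
  have "finite D" using \<open>finite I\<close> by (simp add: D_def)
  obtain \<beta> where "\<beta> None = p \<rho>" and dom: "dominated p g (insert None D) \<beta>"
    using dominated_extend[OF p _ \<open>finite D\<close> dominated_singleton[OF p, of g None]]
    by (auto simp: g_def)
  define lam where "lam i = Complex (\<beta> (Some (i, False))) (- \<beta> (Some (i, True)))" for i
  define coords :: "real \<Rightarrow> ('i \<Rightarrow> complex) \<Rightarrow> ('i \<times> bool) option \<Rightarrow> real"
    where "coords t \<sigma> b =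
      (case b of None \<Rightarrow> t | Some (i, im) \<Rightarrow> if im then Im (\<sigma> i) else Re (\<sigma> i))" for t \<sigma> b
  note sum_D = sum_insert_None_Some_bool[OF \<open>finite I\<close>, folded D_def]
  have key: "t * p \<rho> + Re (\<Sum>i\<in>I. \<sigma> i * lam i) \<le> p (\<lambda>j. t *\<^sub>R \<rho> j + \<sigma> j)" for t \<sigma>
  proof -
    have "(\<Sum>b\<in>insert None D. coords t \<sigma> b * \<beta> b) = t * p \<rho> + Re (\<Sum>i\<in>I. \<sigma> i * lam i)"
      unfolding sum_D by (simp add: coords_def lam_def \<open>\<beta> None = p \<rho>\<close> Re_sum)
    moreover have "(\<Sum>b\<in>insert None D. coords t \<sigma> b *\<^sub>R g b) j = t *\<^sub>R \<rho> j + \<sigma> j"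
      if "j \<in> I" for j
    proof -
      have "(\<Sum>b\<in>insert None D. coords t \<sigma> b *\<^sub>R g b) j
          = t *\<^sub>R \<rho> j + (\<Sum>i\<in>I. if i = j then Re (\<sigma> i) *\<^sub>R 1 + Im (\<sigma> i) *\<^sub>R \<i> else 0)"
        unfolding sum_D plus_fun_apply sum_fun_apply
        by (intro arg_cong2[where f="(+)"] sum.cong) (auto simp: coords_def g_def)
      also have "\<dots> = t *\<^sub>R \<rho> j + \<sigma> j"
        using that \<open>finite I\<close> by (simp add: complex_eq_iff)
      finally show ?thesis .
    qed
    then have "p (\<Sum>b\<in>insert None D. coords t \<sigma> b *\<^sub>R g b) = p (\<lambda>j. t *\<^sub>R \<rho> j + \<sigma> j)"
      by (rule local)
    moreover have "(\<Sum>b\<in>insert None D. coords t \<sigma> b * \<beta> b) \<le> p (\<Sum>b\<in>insert None D. coords t \<sigma> b *\<^sub>R g b)"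
      using dom unfolding dominated_def by blast
    ultimately show ?thesis by linarith
  qed
  have "Re (\<Sum>i\<in>I. \<sigma> i * lam i) \<le> p \<sigma>" for \<sigma>
    using key[of 0 \<sigma>] by simp
  moreover have "p \<rho> - Re (\<Sum>i\<in>I. \<rho> i * lam i) \<le> p 0"
    using key[of 1 "\<lambda>i. - \<rho> i"] by (simp add: sum_negf zero_fun_def)
  ultimately show ?thesis using sublinear_zero[OF p] by auto
qed

lemma sublinear_proj_norm: "0 < k \<Longrightarrow> sublinear (proj_norm k n)"
  unfolding sublinear_def plus_fun_def scaleR_fun_def scaleR_conv_of_real
  by (simp add: proj_norm_add_le proj_norm_scale)

lemma proj_norm_supporting_functional:
  assumes "0 < k"
  shows "\<exists>lam. (\<forall>\<sigma>. Re (\<Sum>i\<in>idx k n. \<sigma> i * lam i) \<le> proj_norm k n \<sigma>)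
    \<and> proj_norm k n \<rho> \<le> Re (\<Sum>i\<in>idx k n. \<rho> i * lam i)"
  by (rule sublinear_supporting_functional[OF sublinear_proj_norm[OF assms] finite_idx proj_norm_cong])

section \<open>Realification\<close>

definition base_index :: "nat \<Rightarrow> (nat \<Rightarrow> nat) \<Rightarrow> (nat \<Rightarrow> nat) \<Rightarrow> nat \<Rightarrow> nat" where
  "base_index k n i = restrict (\<lambda>j. if i j < n j then i j else i j - n j) {..<k}"

definition phase :: "nat \<Rightarrow> (nat \<Rightarrow> nat) \<Rightarrow> nat \<Rightarrow> nat \<Rightarrow> complex" where
  "phase k n j p = (if p < n j then 1 else if j = k - 1 then - \<i> else \<i>)"

text \<open>\<open>y\<^sub>j = (y', y'') \<in> \<real>\<^sup>2\<^sup>n\<close> corresponds to \<open>y' + \<i> y''\<close>, except in the output slot \<open>k - 1\<close>: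
  there \<open>y\<^sub>k\<^sub>-\<^sub>1\<close> is paired with \<open>(Re z, Im z)\<close>, and \<open>Re z y' + Im z y'' = Re (z (y' - \<i> y''))\<close>.\<close>
definition complexify :: "nat \<Rightarrow> (nat \<Rightarrow> nat) \<Rightarrow> (nat \<Rightarrow> nat \<Rightarrow> real) \<Rightarrow> nat \<Rightarrow> nat \<Rightarrow> complex" where
  "complexify k n y j p = of_real (y j p) + (if j = k - 1 then - \<i> else \<i>) * of_real (y j (p + n j))"

lemma lam_tilde_eq:
  assumes "0 < k"
  shows "lam_tilde k n lam i = Re (lam (base_index k n i) * (\<Prod>j<k. phase k n j (i j)))"
proof -
  define t where "t = card {j. j < k - 1 \<and> n j \<le> i j}"
  have "(\<Prod>j<k - 1. phase k n j (i j)) = (\<Prod>j<k - 1. if n j \<le> i j then \<i> else 1)"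
    by (rule prod.cong) (auto simp: phase_def)
  also have "\<dots> = \<i> ^ t"
    by (simp add: prod.If_cases t_def Int_def conj_commute)
  finally have "(\<Prod>j<k. phase k n j (i j)) = \<i> ^ t * phase k n (k - 1) (i (k - 1))"
    using assms by (metis Suc_pred' prod.lessThan_Suc)
  then show ?thesis
    unfolding lam_tilde_def Let_def base_index_def[symmetric] t_def[symmetric]
    by (auto simp: phase_def mult.commute mult.left_commute)
qed

lemma base_index_mem:
  assumes "x \<in> idx k (\<lambda>j. 2 * n j)"
  shows "base_index k n x \<in> idx k n"
proof -
  have "x j < 2 * n j" if "j < k" for j
    using idx_lt[OF assms that] by simp
  then have "(if x j < n j then x j else x j - n j) < n j" if "j < k" for j
    using that by fastforce
  then show ?thesis by (auto simp: idx_def base_index_def restrict_PiE_iff)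
qed

lemma base_index_fiber:
  assumes i': "i' \<in> idx k n"
  shows "{x \<in> idx k (\<lambda>j. 2 * n j). base_index k n x = i'} = PiE {..<k} (\<lambda>j. {i' j, i' j + n j})"
proof (intro equalityI subsetI)
  fix x assume "x \<in> {x \<in> idx k (\<lambda>j. 2 * n j). base_index k n x = i'}"
  then have x: "x \<in> idx k (\<lambda>j. 2 * n j)" and base: "base_index k n x = i'" by auto
  have "x j \<in> {i' j, i' j + n j}" if "j < k" for j
    using that base[symmetric] by (auto simp: base_index_def)
  then show "x \<in> PiE {..<k} (\<lambda>j. {i' j, i' j + n j})"
    using x by (auto simp: idx_def PiE_iff)
next
  fix x assume x: "x \<in> PiE {..<k} (\<lambda>j. {i' j, i' j + n j})"
  have i'_lt: "i' j < n j" if "j < k" for j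
    using idx_lt[OF i' that] .
  have "x j < 2 * n j" if "j < k" for j
    using PiE_mem[OF x, of j] i'_lt[OF that] that by auto
  then have "x \<in> idx k (\<lambda>j. 2 * n j)"
    using x by (auto simp: idx_def PiE_iff)
  moreover have "base_index k n x j = i' j" for j
  proof (cases "j < k")
    case True
    then show ?thesis using PiE_mem[OF x, of j] i'_lt[OF True] by (auto simp: base_index_def)
  next
    case False
    then show ?thesis using x i' by (auto simp: base_index_def PiE_iff idx_def extensional_def)
  qed
  ultimately show "x \<in> {x \<in> idx k (\<lambda>j. 2 * n j). base_index k n x = i'}"
    by auto
qed

lemma lam_tilde_realification:
  assumes "0 < k"
  shows "(\<Sum>i\<in>idx k (\<lambda>j. 2 * n j). lam_tilde k n lam i * (\<Prod>j<k. y j (i j)))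
     = Re (\<Sum>i\<in>idx k n. lam i * (\<Prod>j<k. complexify k n y j (i j)))"
proof -
  define h where "h j p = phase k n j p * of_real (y j p)" for j p
  have "(\<Sum>i\<in>idx k (\<lambda>j. 2 * n j). lam_tilde k n lam i * (\<Prod>j<k. y j (i j)))
      = Re (\<Sum>i\<in>idx k (\<lambda>j. 2 * n j). lam (base_index k n i) * (\<Prod>j<k. h j (i j)))"
  proof (simp only: Re_sum, rule sum.cong[OF refl])
    fix i
    have eq: "lam (base_index k n i) * (\<Prod>j<k. h j (i j))
        = lam (base_index k n i) * (\<Prod>j<k. phase k n j (i j)) * of_real (\<Prod>j<k. y j (i j))"
      by (simp add: h_def prod.distrib mult.assoc)
    have Re_mult: "Re (w * of_real r) = Re w * r" for w r
      by simp
    then show "lam_tilde k n lam i * (\<Prod>j<k. y j (i j))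
        = Re (lam (base_index k n i) * (\<Prod>j<k. h j (i j)))"
      by (simp only: eq Re_mult lam_tilde_eq[OF assms])
  qed
  also have "(\<Sum>i\<in>idx k (\<lambda>j. 2 * n j). lam (base_index k n i) * (\<Prod>j<k. h j (i j)))
     = (\<Sum>i'\<in>idx k n. \<Sum>i\<in>{x \<in> idx k (\<lambda>j. 2 * n j). base_index k n x = i'}.
          lam (base_index k n i) * (\<Prod>j<k. h j (i j)))"
    by (rule sum.group[symmetric]) (auto simp: finite_idx base_index_mem)
  also have "\<dots> = (\<Sum>i'\<in>idx k n. lam i' * (\<Prod>j<k. complexify k n y j (i' j)))"
  proof (rule sum.cong[OF refl])
    fix i' assume i': "i' \<in> idx k n"
    have "(\<Sum>i\<in>PiE {..<k} (\<lambda>j. {i' j, i' j + n j}). \<Prod>j<k. h j (i j))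
       = (\<Prod>j<k. \<Sum>p\<in>{i' j, i' j + n j}. h j p)"
      by (rule prod_sum_PiE[symmetric]) auto
    also have "\<dots> = (\<Prod>j<k. complexify k n y j (i' j))"
    proof (rule prod.cong[OF refl])
      fix j assume "j \<in> {..<k}"
      then have "i' j < n j" using idx_lt[OF i'] by simp
      then show "(\<Sum>p\<in>{i' j, i' j + n j}. h j p) = complexify k n y j (i' j)"
        by (simp add: h_def phase_def complexify_def)
    qed
    finally have tensor: "(\<Sum>i\<in>PiE {..<k} (\<lambda>j. {i' j, i' j + n j}). \<Prod>j<k. h j (i j))
        = (\<Prod>j<k. complexify k n y j (i' j))" .
    have "(\<Sum>i\<in>{x \<in> idx k (\<lambda>j. 2 * n j). base_index k n x = i'}.
          lam (base_index k n i) * (\<Prod>j<k. h j (i j)))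
        = lam i' * (\<Sum>i\<in>{x \<in> idx k (\<lambda>j. 2 * n j). base_index k n x = i'}. \<Prod>j<k. h j (i j))"
      unfolding sum_distrib_left by (rule sum.cong) auto
    then show "(\<Sum>i\<in>{x \<in> idx k (\<lambda>j. 2 * n j). base_index k n x = i'}.
          lam (base_index k n i) * (\<Prod>j<k. h j (i j)))
        = lam i' * (\<Prod>j<k. complexify k n y j (i' j))"
      unfolding base_index_fiber[OF i'] tensor .
  qed
  finally show ?thesis .
qed

lemma l2c_complexify: "l2c (n j) (complexify k n y j) = l2r (2 * n j) (y j)"
proof -
  have "(cmod (complexify k n y j p))\<^sup>2 = (y j p)\<^sup>2 + (y j (n j + p))\<^sup>2" for p
    by (simp add: complexify_def cmod_power2 add.commute)
  then have "(\<Sum>p<n j. (cmod (complexify k n y j p))\<^sup>2) = (\<Sum>q<n j + n j. (y j q)\<^sup>2)"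
    by (simp add: sum_lessThan_add_split sum.distrib)
  then show ?thesis unfolding l2c_def l2r_def by (simp add: mult_2)
qed

lemma complexify_surj: "\<exists>y. \<forall>j p. p < n j \<longrightarrow> complexify k n y j p = v j p"
proof -
  define y where "y j q = (if q < n j then Re (v j q)
    else (if j = k - 1 then -1 else 1) * Im (v j (q - n j)))" for j q
  have "complexify k n y j p = v j p" if "p < n j" for j p
    using that by (simp add: complexify_def y_def complex_eq_iff)
  then show ?thesis by blast
qed

section \<open>The linear program\<close>

lemma lam_tilde_idx:
  assumes "0 < k" "i \<in> idx k n"
  shows "lam_tilde k n lam i = Re (lam i)"
proof -
  have "base_index k n i = i"
  proof
    fix j show "base_index k n i j = i j"
      using assms(2) idx_lt[OF assms(2), of j]
      by (cases "j < k") (auto simp: base_index_def idx_def PiE_iff extensional_def)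
  qed
  moreover have "(\<Prod>j<k. phase k n j (i j)) = 1"
    by (rule prod.neutral) (simp add: phase_def idx_lt[OF assms(2)])
  ultimately show ?thesis by (simp add: lam_tilde_eq[OF assms(1)])
qed

lemma lam_tilde_shift_last:
  assumes "0 < k" "i \<in> idx k n"
  shows "lam_tilde k n lam (i(k - 1 := i (k - 1) + n (k - 1))) = Im (lam i)"
proof -
  define i2 where "i2 = i(k - 1 := i (k - 1) + n (k - 1))"
  have "base_index k n i2 = i"
  proof
    fix j show "base_index k n i2 j = i j"
      using assms idx_lt[OF assms(2), of j]
      by (cases "j < k") (auto simp: base_index_def i2_def idx_def PiE_iff extensional_def)
  qed
  moreover have "(\<Prod>j<k. phase k n j (i2 j)) = (\<Prod>j<k. if j = k - 1 then - \<i> else 1)"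
    by (rule prod.cong) (auto simp: phase_def i2_def idx_lt[OF assms(2)])
  moreover have "(\<Prod>j<k. if j = k - 1 then - \<i> else 1) = - \<i>"
    using assms(1) by (simp add: prod.delta)
  ultimately show ?thesis by (simp add: lam_tilde_eq[OF assms(1)] i2_def)
qed

lemma lp_objective_eq:
  assumes "0 < k"
  shows "lp_objective k n \<rho> lam = Re (\<Sum>i\<in>idx k n. \<rho> i * lam i)"
proof -
  define E where "E = PiE {..<k} (\<lambda>j. if j = k - 1 then {n j..<2 * n j} else {..<n j})"
  define unshift where
    "unshift i = restrict (\<lambda>j. if j = k - 1 then i j - n j else i j) {..<k}" for i :: "nat \<Rightarrow> nat"
  define shift where "shift i = i(k - 1 := i (k - 1) + n (k - 1))" for i :: "nat \<Rightarrow> nat"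
  have E_mem: "a j \<in> (if j = k - 1 then {n j..<2 * n j} else {..<n j})" if "a \<in> E" "j < k" for a j
    using that by (auto simp: E_def PiE_iff)
  have E_ext: "a j = undefined" if "a \<in> E" "\<not> j < k" for a j
    using that by (auto simp: E_def PiE_iff extensional_def)
  have shift_unshift: "shift (unshift a) = a" and unshift_mem: "unshift a \<in> idx k n" if "a \<in> E" for a
  proof -
    show "shift (unshift a) = a"
    proof
      fix j show "shift (unshift a) j = a j"
        using E_mem[OF that, of j] E_ext[OF that, of j] assms
        by (cases "j < k") (auto simp: shift_def unshift_def)
    qed
    show "unshift a \<in> idx k n"
      using E_mem[OF that] by (force simp: unshift_def idx_def restrict_PiE_iff)
  qed
  have "(\<Sum>i\<in>E. Im (\<rho> (unshift i)) * lam_tilde k n lam i) = (\<Sum>i\<in>idx k n. Im (\<rho> i) * Im (lam i))"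
  proof (rule sum.reindex_bij_witness[of _ shift unshift])
    fix b assume b: "b \<in> idx k n"
    show "unshift (shift b) = b"
    proof
      fix j show "unshift (shift b) j = b j"
        using b by (auto simp: shift_def unshift_def idx_def PiE_iff extensional_def)
    qed
    show "shift b \<in> E"
      using b assms idx_lt[OF b] by (auto simp: E_def shift_def idx_def PiE_iff extensional_def)
  next
    fix a assume "a \<in> E"
    then show "Im (\<rho> (unshift a)) * Im (lam (unshift a)) = Im (\<rho> (unshift a)) * lam_tilde k n lam a"
      using lam_tilde_shift_last[OF assms unshift_mem] shift_unshift by (simp add: shift_def)
  qed (use shift_unshift unshift_mem in auto)
  moreover have "(\<Sum>i\<in>idx k n. Re (\<rho> i) * lam_tilde k n lam i) = (\<Sum>i\<in>idx k n. Re (\<rho> i) * Re (lam i))"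
    by (rule sum.cong) (simp_all add: lam_tilde_idx[OF assms])
  ultimately show ?thesis
    unfolding lp_objective_def E_def[symmetric] unshift_def[symmetric]
    by (simp add: Re_sum sum_subtractf)
qed

definition multilinear_form :: "nat \<Rightarrow> (nat \<Rightarrow> nat) \<Rightarrow> ((nat \<Rightarrow> nat) \<Rightarrow> real)
    \<Rightarrow> (nat \<Rightarrow> nat \<Rightarrow> real) \<Rightarrow> real" where
  "multilinear_form k d L y = (\<Sum>i\<in>idx k d. L i * (\<Prod>j<k. y j (i j)))"

lemma multilinear_form_cong:
  "(\<And>j. j < k \<Longrightarrow> y j = y' j) \<Longrightarrow> multilinear_form k d L y = multilinear_form k d L y'"
  unfolding multilinear_form_def by (intro sum.cong prod.cong) auto

lemma multilinear_form_linear_in_slot: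
  assumes "q < k"
  shows "\<exists>a. \<forall>x. multilinear_form k d L (y(q := x)) = (\<Sum>p<d q. x p * a p)"
proof -
  define a where
    "a p = (\<Sum>i\<in>{i \<in> idx k d. i q = p}. L i * (\<Prod>j\<in>{..<k} - {q}. y j (i j)))" for p
  have prod_split: "(\<Prod>j<k. (y(q := x)) j (i j)) = x (i q) * (\<Prod>j\<in>{..<k} - {q}. y j (i j))" for x i
    using assms by (subst prod.remove[of _ q]) (auto intro!: prod.cong)
  have "multilinear_form k d L (y(q := x)) = (\<Sum>p<d q. x p * a p)" for x
  proof -
    have "multilinear_form k d L (y(q := x))
        = (\<Sum>p\<in>{..<d q}. \<Sum>i\<in>{i \<in> idx k d. i q = p}. L i * (x (i q) * (\<Prod>j\<in>{..<k} - {q}. y j (i j))))"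
      unfolding multilinear_form_def prod_split
      by (rule sum.group[symmetric]) (use assms in \<open>auto simp: finite_idx idx_lt\<close>)
    also have "\<dots> = (\<Sum>p<d q. x p * a p)"
      unfolding a_def sum_distrib_left
      by (intro sum.cong refl) (auto simp: algebra_simps)
    finally show ?thesis .
  qed
  then show ?thesis by blast
qed

text \<open>The rows \<open>c\<^sub>j(\<cdot>, s\<^sub>j)\<close> are replaced by arbitrary vectors one slot at a time. When the
  slots after \<open>q\<close> still hold rows, the coefficient vector \<open>a\<close> of slot \<open>q\<close> satisfies
  \<open>\<parallel>I\<^sub>q a\<parallel>\<^sub>\<infinity> \<le> K\<^sup>q \<Prod>\<^sub>j\<^sub><\<^sub>q \<parallel>y\<^sub>j\<parallel>\<close> by the induction hypothesis, so the inverse bound and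
  Cauchy-Schwarz cost one more factor \<open>K\<close>.\<close>
lemma multilinear_form_bound:
  assumes rows: "\<forall>s\<in>idx k N. \<bar>multilinear_form k d L (\<lambda>j p. c j p (s j))\<bar> \<le> 1"
    and inv: "\<And>j x. j < k \<Longrightarrow> l2r (d j) x \<le> K * linf (N j) (colmap (d j) (c j) x)"
    and "0 \<le> K"
  shows "\<bar>multilinear_form k d L y\<bar> \<le> K ^ k * (\<Prod>j<k. l2r (d j) (y j))"
proof -
  have "\<bar>multilinear_form k d L y\<bar> \<le> K ^ q * (\<Prod>j<q. l2r (d j) (y j))"
    if "q \<le> k" "\<And>j. q \<le> j \<Longrightarrow> j < k \<Longrightarrow> \<exists>s<N j. y j = (\<lambda>p. c j p s)" for q y
    using that
  proof (induction q arbitrary: y)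
    case 0
    then have "\<forall>j\<in>{..<k}. \<exists>s. s < N j \<and> y j = (\<lambda>p. c j p s)" by auto
    then obtain s where s: "\<And>j. j < k \<Longrightarrow> s j < N j \<and> y j = (\<lambda>p. c j p (s j))"
      by (metis bchoice lessThan_iff)
    then have "restrict s {..<k} \<in> idx k N" by (simp add: idx_def)
    then have "\<bar>multilinear_form k d L (\<lambda>j p. c j p (restrict s {..<k} j))\<bar> \<le> 1"
      using rows by blast
    moreover have "multilinear_form k d L y = multilinear_form k d L (\<lambda>j p. c j p (restrict s {..<k} j))"
      using s by (intro multilinear_form_cong) auto
    ultimately show ?case by simp
  next
    case (Suc q)
    then have "q < k" by simp
    define P where "P = (\<Prod>j<q. l2r (d j) (y j))"
    have "0 \<le> P" unfolding P_def by (simp add: prod_nonneg l2r_nonneg)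
    obtain a where lin: "\<And>x. multilinear_form k d L (y(q := x)) = (\<Sum>p<d q. x p * a p)"
      using multilinear_form_linear_in_slot[OF \<open>q < k\<close>] by blast
    have "\<bar>colmap (d q) (c q) a s\<bar> \<le> K ^ q * P" if "s < N q" for s
    proof -
      have "colmap (d q) (c q) a s = multilinear_form k d L (y(q := (\<lambda>p. c q p s)))"
        unfolding lin colmap_def by (simp add: mult.commute)
      also have "\<bar>\<dots>\<bar> \<le> K ^ q * (\<Prod>j<q. l2r (d j) ((y(q := (\<lambda>p. c q p s))) j))"
      proof (rule Suc.IH)
        show "q \<le> k" using \<open>q < k\<close> by simp
        fix j assume "q \<le> j" "j < k"
        then show "\<exists>s'<N j. (y(q := (\<lambda>p. c q p s))) j = (\<lambda>p. c j p s')"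
          using Suc.prems(2)[of j] that by (cases "j = q") auto
      qed
      also have "(\<Prod>j<q. l2r (d j) ((y(q := (\<lambda>p. c q p s))) j)) = P"
        unfolding P_def by (rule prod.cong) auto
      finally show ?thesis .
    qed
    then have "linf (N q) (colmap (d q) (c q) a) \<le> K ^ q * P"
      using \<open>0 \<le> P\<close> \<open>0 \<le> K\<close> by (intro linf_le) auto
    then have a_le: "l2r (d q) a \<le> K * (K ^ q * P)"
      using inv[OF \<open>q < k\<close>, of a] \<open>0 \<le> K\<close> by (meson mult_left_mono order_trans)
    have "\<bar>multilinear_form k d L y\<bar> = \<bar>\<Sum>p<d q. y q p * a p\<bar>"
      using lin[of "y q"] by simp
    also have "\<dots> \<le> l2r (d q) (y q) * l2r (d q) a"
      by (rule abs_sum_mult_le_l2r)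
    also have "\<dots> \<le> l2r (d q) (y q) * (K * (K ^ q * P))"
      by (rule mult_left_mono[OF a_le l2r_nonneg])
    also have "\<dots> = K ^ Suc q * (\<Prod>j<Suc q. l2r (d j) (y j))"
      unfolding P_def by simp
    finally show ?case .
  qed
  from this[of k] show ?thesis by simp
qed

lemma lp_feasible_iff:
  "lp_feasible k n N c lam \<longleftrightarrow>
     (\<forall>s\<in>idx k N. \<bar>multilinear_form k (\<lambda>j. 2 * n j) (lam_tilde k n lam) (\<lambda>j p. c j p (s j))\<bar> \<le> 1)"
  unfolding lp_feasible_def multilinear_form_def ..

lemma feasible_tensor_bound:
  assumes "0 < k" "lp_feasible k n N c lam" "0 \<le> K"
    and inv: "\<And>j x. j < k \<Longrightarrow> l2r (2 * n j) x \<le> K * linf (N j) (colmap (2 * n j) (c j) x)"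
  shows "Re (\<Sum>i\<in>idx k n. lam i * (\<Prod>j<k. v j (i j))) \<le> K ^ k * (\<Prod>j<k. l2c (n j) (v j))"
proof -
  obtain y where y: "\<And>j p. p < n j \<Longrightarrow> complexify k n y j p = v j p"
    using complexify_surj by blast
  have "(\<Sum>i\<in>idx k n. lam i * (\<Prod>j<k. v j (i j)))
      = (\<Sum>i\<in>idx k n. lam i * (\<Prod>j<k. complexify k n y j (i j)))"
    by (intro sum.cong refl arg_cong2[where f="(*)"] prod.cong) (auto simp: y idx_lt)
  then have "Re (\<Sum>i\<in>idx k n. lam i * (\<Prod>j<k. v j (i j)))
      = multilinear_form k (\<lambda>j. 2 * n j) (lam_tilde k n lam) y"
    by (simp add: multilinear_form_def lam_tilde_realification[OF assms(1)])
  also have "\<dots> \<le> K ^ k * (\<Prod>j<k. l2r (2 * n j) (y j))"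
    using multilinear_form_bound[OF _ inv \<open>0 \<le> K\<close>] assms(2)
    by (simp add: lp_feasible_iff abs_le_iff)
  also have "(\<Prod>j<k. l2r (2 * n j) (y j)) = (\<Prod>j<k. l2c (n j) (v j))"
    by (intro prod.cong refl) (metis l2c_complexify l2c_cong y)
  finally show ?thesis .
qed

lemma pairing_le_proj_norm:
  assumes "0 < k" "0 < M"
    and tensor: "\<And>v. Re (\<Sum>i\<in>idx k n. lam i * (\<Prod>j<k. v j (i j))) \<le> M * (\<Prod>j<k. l2c (n j) (v j))"
  shows "Re (\<Sum>i\<in>idx k n. \<sigma> i * lam i) \<le> M * proj_norm k n \<sigma>"
proof -
  have "Re (\<Sum>i\<in>idx k n. \<sigma> i * lam i) / M \<le> proj_norm k n \<sigma>"
  proof (rule proj_norm_greatest[OF assms(1)])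
    fix R u assume "represents k n \<sigma> R u"
    then have "(\<Sum>i\<in>idx k n. \<sigma> i * lam i) = (\<Sum>r<R. \<Sum>i\<in>idx k n. lam i * (\<Prod>j<k. u r j (i j)))"
      by (simp add: represents_def sum_distrib_left sum_distrib_right sum.swap[of _ "idx k n"]
          mult.commute cong: sum.cong)
    then have "Re (\<Sum>i\<in>idx k n. \<sigma> i * lam i)
        = (\<Sum>r<R. Re (\<Sum>i\<in>idx k n. lam i * (\<Prod>j<k. u r j (i j))))"
      by (simp only: Re_sum)
    also have "\<dots> \<le> (\<Sum>r<R. M * (\<Prod>j<k. l2c (n j) (u r j)))"
      by (rule sum_mono) (rule tensor)
    finally have "Re (\<Sum>i\<in>idx k n. \<sigma> i * lam i) \<le> (\<Sum>r<R. M * (\<Prod>j<k. l2c (n j) (u r j)))" .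
    then show "Re (\<Sum>i\<in>idx k n. \<sigma> i * lam i) / M \<le> rep_cost k n R u"
      using \<open>0 < M\<close> by (simp add: rep_cost_def pos_divide_le_eq sum_distrib_left mult.commute)
  qed
  then show ?thesis using \<open>0 < M\<close> by (simp add: pos_divide_le_eq mult.commute)
qed

lemma lp_objective_le_proj_norm:
  assumes "0 < k" "lp_feasible k n N c lam" "0 < K"
    and "\<And>j x. j < k \<Longrightarrow> l2r (2 * n j) x \<le> K * linf (N j) (colmap (2 * n j) (c j) x)"
  shows "lp_objective k n \<rho> lam \<le> K ^ k * proj_norm k n \<rho>"
  unfolding lp_objective_eq[OF assms(1)]
  using assms by (intro pairing_le_proj_norm feasible_tensor_bound) auto

text \<open>Each constraint of the linear program evaluates \<open>lam\<close> at an elementary tensor of projective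
  norm at most one.\<close>
lemma supporting_functional_feasible:
  assumes "0 < k"
    and rows: "\<And>j s. j < k \<Longrightarrow> s < N j \<Longrightarrow> l2r (2 * n j) (\<lambda>p. c j p s) \<le> 1"
    and supp: "\<And>\<sigma>. Re (\<Sum>i\<in>idx k n. \<sigma> i * lam i) \<le> proj_norm k n \<sigma>"
  shows "lp_feasible k n N c lam"
  unfolding lp_feasible_iff
proof
  fix s assume s: "s \<in> idx k N"
  define y where "y = (\<lambda>j p. c j p (s j))"
  define \<sigma> where "\<sigma> i = (\<Prod>j<k. complexify k n y j (i j))" for i
  have "multilinear_form k (\<lambda>j. 2 * n j) (lam_tilde k n lam) y
      = Re (\<Sum>i\<in>idx k n. lam i * (\<Prod>j<k. complexify k n y j (i j)))"
    unfolding multilinear_form_def by (rule lam_tilde_realification[OF assms(1)])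
  also have "\<dots> = Re (\<Sum>i\<in>idx k n. \<sigma> i * lam i)"
    by (intro arg_cong[where f=Re] sum.cong refl) (simp add: \<sigma>_def mult.commute)
  finally have "multilinear_form k (\<lambda>j. 2 * n j) (lam_tilde k n lam) y = Re (\<Sum>i\<in>idx k n. \<sigma> i * lam i)" .
  moreover have "proj_norm k n \<sigma> \<le> 1"
  proof -
    have "proj_norm k n \<sigma> \<le> (\<Prod>j<k. l2c (n j) (complexify k n y j))"
      unfolding \<sigma>_def by (rule proj_norm_tensor_le)
    also have "\<dots> \<le> 1"
      by (intro prod_le_1) (auto simp: l2c_complexify l2r_nonneg y_def rows idx_lt[OF s])
    finally show ?thesis .
  qed
  moreover have "proj_norm k n (\<lambda>i. - \<sigma> i) = proj_norm k n \<sigma>"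
    using proj_norm_scale[OF assms(1), of n "-1" \<sigma>] by simp
  ultimately show "\<bar>multilinear_form k (\<lambda>j. 2 * n j) (lam_tilde k n lam) (\<lambda>j p. c j p (s j))\<bar> \<le> 1"
    using supp[of \<sigma>] supp[of "\<lambda>i. - \<sigma> i"] by (simp add: y_def[symmetric] sum_negf abs_le_iff)
qed

theorem theorem2:
  fixes k m :: nat and n N :: "nat \<Rightarrow> nat"
    and c :: "nat \<Rightarrow> nat \<Rightarrow> nat \<Rightarrow> real"
    and \<rho> :: "(nat \<Rightarrow> nat) \<Rightarrow> complex"
  assumes "k \<ge> 1" and "m \<ge> 2"
    and "\<forall>j<k. injective_map (2 * n j) (N j) (c j)"
    and "\<forall>j<k. opnorm (2 * n j) (N j) (c j) \<le> 1"
    and "\<forall>j<k. invnorm (2 * n j) (N j) (c j) \<le> real m / (real m - 1)"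
  shows "bdd_above (lp_objective k n \<rho> ` {lam. lp_feasible k n N c lam})
     \<and> proj_norm k n \<rho> \<le> lp_value k n N c \<rho>
     \<and> lp_value k n N c \<rho> \<le> (real m / (real m - 1)) ^ k * proj_norm k n \<rho>"
proof -
  define K where "K = real m / (real m - 1)"
  have "0 < k" "0 < K" using assms(1,2) by (auto simp: K_def)
  have inv: "l2r (2 * n j) x \<le> K * linf (N j) (colmap (2 * n j) (c j) x)" if "j < k" for j x
    using l2r_le_invnorm[of "2 * n j" "N j" "c j" x] assms(3,5) that linf_nonneg
    unfolding K_def by (meson mult_right_mono order_trans)
  have rows: "l2r (2 * n j) (\<lambda>p. c j p s) \<le> 1" if "j < k" "s < N j" for j s
    using row_l2r_le_opnorm[OF that(2)] assms(4) that(1) by (meson order_trans)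
  have upper: "lp_objective k n \<rho> lam \<le> K ^ k * proj_norm k n \<rho>" if "lp_feasible k n N c lam" for lam
    using lp_objective_le_proj_norm[OF \<open>0 < k\<close> that \<open>0 < K\<close> inv] by simp
  then have bdd: "bdd_above (lp_objective k n \<rho> ` {lam. lp_feasible k n N c lam})"
    by (intro bdd_aboveI2) auto
  obtain lam where supp: "\<And>\<sigma>. Re (\<Sum>i\<in>idx k n. \<sigma> i * lam i) \<le> proj_norm k n \<sigma>"
    and lower: "proj_norm k n \<rho> \<le> Re (\<Sum>i\<in>idx k n. \<rho> i * lam i)"
    using proj_norm_supporting_functional[OF \<open>0 < k\<close>] by blast
  have "lp_feasible k n N c lam"
    using supporting_functional_feasible[OF \<open>0 < k\<close> rows supp] by simp
  then have "lp_objective k n \<rho> lam \<le> lp_value k n N c \<rho>"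
    unfolding lp_value_def by (intro cSup_upper[OF _ bdd]) simp
  then have "proj_norm k n \<rho> \<le> lp_value k n N c \<rho>"
    using lower by (simp add: lp_objective_eq[OF \<open>0 < k\<close>])
  moreover have "lp_value k n N c \<rho> \<le> K ^ k * proj_norm k n \<rho>"
    unfolding lp_value_def using \<open>lp_feasible k n N c lam\<close> upper by (intro cSup_least) auto
  ultimately show ?thesis using bdd by (simp add: K_def)
qed

end
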